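(* Let $\pi=a_1a_2\cdots a_n\in\mathfrak{S}_n$, let $i_1<i_2<\cdots<i_d$ be the descents of $\pi$ (the indices $i\in[n-1]$ with $a_i>a_{i+1}$) and let $x_k=a_{i_k}$. Put $\pi_0=\pi$ and $\pi_k=r^{x_k}(\pi_{k-1})$ for $k=1,\dots,d$. Then $S(\pi)=\pi_d$, where $S$ is the stack-sorting operator.
   Context: The stack-sorting operator $S$ is defined recursively on words with distinct letters from $\{1,2,\dots\}$: $S$ of the empty word is empty; if $w$ is nonempty write $w=LmR$ with $m$ the greatest letter of $w$, and set $S(w)=S(L)S(R)m$. For a permutation $\sigma=c_1\cdots c_n\in\mathfrak{S}_n$ and a letter $x=c_k$, put $c_{n+1}=n+1$ and define $r^x(\sigma)$ as the permutation obtained by removing $x$ and inserting it between the first pair of consecutive letters $c_j,c_{j+1}$ with $j>k$ (i.e. to the right of $x$) such that $c_j<x<c_{j+1}$ (if no such pair exists, $r^x(\sigma)=\sigma$). *)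

theory Defs
  imports Main
begin

text \<open>Words are lists of naturals with distinct letters; a permutation of
  [n] is a list w with distinct w and set w = {1..n}.  Positions are 0-indexed.\<close>

definition is_perm :: "nat \<Rightarrow> nat list \<Rightarrow> bool" where
  "is_perm n w \<longleftrightarrow> distinct w \<and> set w = {1..n}"

lemma takeWhile_shorter: "m \<in> set w \<Longrightarrow> length (takeWhile (\<lambda>y. y \<noteq> m) w) < length w"
  by (induction w) auto

lemma dropWhile_tl_shorter: "w \<noteq> [] \<Longrightarrow> length (tl (dropWhile P w)) < length w"
  using length_dropWhile_le[of P w] by (cases w) auto

function stack_sort :: "nat list \<Rightarrow> nat list" where
  "stack_sort w =
     (if w = [] then []
      else (let m = Max (set w);
                L = takeWhile (\<lambda>y. y \<noteq> m) w;
                R = tl (dropWhile (\<lambda>y. y \<noteq> m) w)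
            in stack_sort L @ stack_sort R @ [m]))"
  by pat_completeness auto
termination
  by (relation "measure length")
     (auto simp: Let_def takeWhile_shorter dropWhile_tl_shorter simp del: length_tl)

text \<open>The letter sequence c_1 .. c_n c_{n+1} with c_{n+1} = n+1 (0-indexed).\<close>
definition ext_letter :: "nat list \<Rightarrow> nat \<Rightarrow> nat" where
  "ext_letter w j = (if j < length w then w ! j else length w + 1)"

text \<open>Admissible gaps for moving x at position k: 0-indexed j with k < j < n and
  c_j < x < c_{j+1}; x is inserted between c_j and c_{j+1}.\<close>
definition gap_ok :: "nat list \<Rightarrow> nat \<Rightarrow> nat \<Rightarrow> bool" where
  "gap_ok w x j \<longleftrightarrow> (\<exists>k. k < length w \<and> w ! k = x \<and> k < j) \<and> j < length w \<and>
      ext_letter w j < x \<and> x < ext_letter w (Suc j)"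

definition move_right :: "nat \<Rightarrow> nat list \<Rightarrow> nat list" where
  "move_right x w =
     (if x \<in> set w \<and> (\<exists>j. gap_ok w x j) then
        (let k = the_elem {k. k < length w \<and> w ! k = x};
             j = (LEAST j. gap_ok w x j)
         in take k w @ drop (Suc k) (take (Suc j) w) @ [x] @ drop (Suc j) w)
      else w)"

definition descent_tops :: "nat list \<Rightarrow> nat list" where
  "descent_tops w = [w ! i. i \<leftarrow> [0..<length w - 1], w ! (Suc i) < w ! i]"

end

theory Submission
  imports Defs "HOL-Library.Multiset"
begin

(* Append the sentinel B = n + 1 and let slide x act on the padded word: it moves x to the first
   gap c < x < c' to its right, so that r^x(pi) @ [B] = slide x (pi @ [B]).  Then induct on
   w = L m R with m = max w, proving the stronger claim that the descent tops of w, slid in turn,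
   transform w @ B # v into S(w) @ B # v for every bound B > w and every tail v.  The descent tops
   of L come first; with m as sentinel of L they turn L m into S(L) m.  Next comes m itself (a
   descent top iff R is nonempty), which slides over R, all of whose letters are smaller, to just
   before B.  Finally the descent tops of R act on R m, again with sentinel m, giving S(R) m. *)

declare stack_sort.simps [simp del]

definition is_gap :: "nat \<Rightarrow> nat list \<Rightarrow> nat \<Rightarrow> bool" where
  "is_gap x s i \<longleftrightarrow> Suc i < length s \<and> s ! i < x \<and> x < s ! Suc i"

lemma is_gap_append: "is_gap x (u @ s) (length u + i) \<longleftrightarrow> is_gap x s i"
  by (simp add: is_gap_def nth_append)

fun insert_at_gap :: "nat \<Rightarrow> nat list \<Rightarrow> nat list option" where
  "insert_at_gap x (a # b # r) =
     (if a < x \<and> x < b then Some (a # x # b # r)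
      else map_option (Cons a) (insert_at_gap x (b # r)))"
| "insert_at_gap x _ = None"

lemma insert_at_gap_conv_Least:
  "insert_at_gap x s =
     (if \<exists>i. is_gap x s i
      then Some (let i = LEAST i. is_gap x s i in take (Suc i) s @ x # drop (Suc i) s)
      else None)"
proof (induction x s rule: insert_at_gap.induct)
  case (1 x a b r)
  have shift: "is_gap x (a # b # r) (Suc i) \<longleftrightarrow> is_gap x (b # r) i" for i
    by (simp add: is_gap_def)
  show ?case
  proof (cases "a < x \<and> x < b")
    case True
    then have "is_gap x (a # b # r) 0" by (simp add: is_gap_def)
    with True show ?thesis by auto
  next
    case False
    then have not0: "\<not> is_gap x (a # b # r) 0" by (simp add: is_gap_def)
    have ex: "(\<exists>i. is_gap x (a # b # r) i) \<longleftrightarrow> (\<exists>i. is_gap x (b # r) i)"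
      using not0 shift by (metis not0_implies_Suc)
    have "(LEAST i. is_gap x (a # b # r) i) = Suc (LEAST i. is_gap x (b # r) i)"
      if "is_gap x (a # b # r) i" for i
      using Least_Suc[OF that not0] shift by simp
    with False ex "1.IH" show ?thesis by (auto simp: Let_def)
  qed
qed (simp_all add: is_gap_def)

lemma mset_insert_at_gap: "insert_at_gap x s = Some r \<Longrightarrow> mset r = add_mset x (mset s)"
  by (induction x s arbitrary: r rule: insert_at_gap.induct) (auto split: if_splits)

lemma insert_at_gap_append_greater:
  assumes "q \<noteq> []" "\<forall>a\<in>set q. a < x" "x < b"
  shows "insert_at_gap x (q @ b # t) = Some (q @ x # b # t)"
  using assms
proof (induction q)
  case (Cons a q)
  then show ?case by (cases q) auto
qed simp

definition slide :: "nat \<Rightarrow> nat list \<Rightarrow> nat list" where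
  "slide x v =
     (case insert_at_gap x (tl (dropWhile (\<lambda>y. y \<noteq> x) v)) of
        None \<Rightarrow> v
      | Some s \<Rightarrow> takeWhile (\<lambda>y. y \<noteq> x) v @ s)"

lemma slide_split:
  "x \<notin> set p \<Longrightarrow>
   slide x (p @ x # q) = (case insert_at_gap x q of None \<Rightarrow> p @ x # q | Some s \<Rightarrow> p @ s)"
  by (induction p) (auto simp: slide_def split: option.split)

lemma slide_append_left: "x \<notin> set u \<Longrightarrow> slide x (u @ v) = u @ slide x v"
  by (induction u) (auto simp: slide_def split: option.split)

lemma fold_slide_append_left:
  "set xs \<inter> set u = {} \<Longrightarrow> fold slide xs (u @ v) = u @ fold slide xs v"
  by (induction xs arbitrary: v) (auto simp: slide_append_left)

lemma mset_slide: "mset (slide x v) = mset v"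
proof (cases "x \<in> set v")
  case True
  then obtain p q where v: "v = p @ x # q" "x \<notin> set p"
    by (blast dest: split_list_first)
  then show ?thesis
    by (auto simp: slide_split dest: mset_insert_at_gap split: option.split)
next
  case False
  then have "dropWhile (\<lambda>y. y \<noteq> x) v = []" by auto
  then show ?thesis by (simp add: slide_def del: dropWhile_eq_Nil_conv)
qed

lemma descent_tops_Nil [simp]: "descent_tops [] = []"
  and descent_tops_singleton [simp]: "descent_tops [a] = []"
  by (simp_all add: descent_tops_def)

lemma descent_tops_Cons_Cons [simp]:
  "descent_tops (a # b # r) = (if b < a then a # descent_tops (b # r) else descent_tops (b # r))"
  unfolding descent_tops_def
  by (simp add: upt_conv_Cons map_Suc_upt[symmetric] comp_def del: upt_Suc cong: if_cong)

lemma set_descent_tops: "set (descent_tops w) \<subseteq> set w"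
  by (induction w rule: induct_list012) auto

lemma descent_tops_append_max:
  assumes "\<forall>a\<in>set L. a < m" "\<forall>a\<in>set R. a < m"
  shows "descent_tops (L @ m # R) = descent_tops L @ (if R = [] then [] else m # descent_tops R)"
  using assms by (induction L rule: induct_list012) (cases R; auto)+

lemma stack_sort_Nil [simp]: "stack_sort [] = []"
  by (simp add: stack_sort.simps)

lemma stack_sort_split_Max:
  assumes "m = Max (set w)" "w = L @ m # R" "m \<notin> set L"
  shows "stack_sort w = stack_sort L @ stack_sort R @ [m]"
proof -
  have "takeWhile (\<lambda>y. y \<noteq> m) w = L" "dropWhile (\<lambda>y. y \<noteq> m) w = m # R"
    using assms(2,3) by (simp_all add: takeWhile_append dropWhile_append)
  with assms show ?thesis by (subst stack_sort.simps) (simp add: Let_def)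
qed

lemma split_list_first_Max:
  assumes "w \<noteq> []"
  obtains L R where "w = L @ Max (set w) # R" "Max (set w) \<notin> set L"
  using split_list_first[OF Max_in[of "set w"]] assms by auto

lemma set_stack_sort: "set (stack_sort w) = set w"
proof (induction "length w" arbitrary: w rule: less_induct)
  case less
  show ?case
  proof (cases "w = []")
    case False
    define m where "m = Max (set w)"
    obtain L R where w: "w = L @ m # R" "m \<notin> set L"
      using split_list_first_Max[OF False] unfolding m_def by blast
    then have "stack_sort w = stack_sort L @ stack_sort R @ [m]"
      using m_def by (simp add: stack_sort_split_Max)
    moreover have "set (stack_sort L) = set L" "set (stack_sort R) = set R"
      using less w(1) by simp_all
    ultimately show ?thesis using w(1) by auto
  qed simp
qed

lemma fold_slide_descent_tops:
  assumes "distinct w" "\<forall>a\<in>set w. a < B"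
  shows "fold slide (descent_tops w) (w @ B # v) = stack_sort w @ B # v"
  using assms
proof (induction "length w" arbitrary: w B v rule: less_induct)
  case less
  show ?case
  proof (cases "w = []")
    case False
    define m where "m = Max (set w)"
    obtain L R where w: "w = L @ m # R" "m \<notin> set L"
      using split_list_first_Max[OF False] unfolding m_def by blast
    have "\<forall>a\<in>set w. a \<le> m" unfolding m_def by simp
    then have L: "\<forall>a\<in>set L. a < m" and R: "\<forall>a\<in>set R. a < m"
      using less.prems(1) unfolding w(1) by (auto simp: order.order_iff_strict)
    have "m < B" using less.prems(2) w(1) by simp
    have IH_L: "fold slide (descent_tops L) (L @ m # R @ B # v) = stack_sort L @ m # R @ B # v"
      using less.hyps[of L m "R @ B # v"] less.prems(1) w(1) L by simp
    have IH_R: "fold slide (descent_tops R) (R @ m # B # v) = stack_sort R @ m # B # v"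
      using less.hyps[of R m "B # v"] less.prems(1) w(1) R by simp
    have sort_w: "stack_sort w = stack_sort L @ stack_sort R @ [m]"
      using m_def w by (rule stack_sort_split_Max)
    show ?thesis
    proof (cases "R = []")
      case True
      then show ?thesis using w IH_L L sort_w by (simp add: descent_tops_append_max)
    next
      case False
      have m_notin: "m \<notin> set (stack_sort L)" using w(2) by (simp add: set_stack_sort)
      have disj: "set (descent_tops R) \<inter> set (stack_sort L) = {}"
        using set_descent_tops[of R] less.prems(1) w(1) by (auto simp: set_stack_sort)
      have "fold slide (descent_tops w) (w @ B # v)
          = fold slide (descent_tops R) (slide m (stack_sort L @ m # R @ B # v))"
        using w(1) IH_L L R False by (simp add: descent_tops_append_max)
      also have "slide m (stack_sort L @ m # R @ B # v) = stack_sort L @ R @ m # B # v"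
        using m_notin insert_at_gap_append_greater[OF False R \<open>m < B\<close>]
        by (simp add: slide_split)
      also have "fold slide (descent_tops R) (stack_sort L @ R @ m # B # v)
          = stack_sort L @ stack_sort R @ m # B # v"
        using fold_slide_append_left[OF disj] IH_R by simp
      finally show ?thesis using sort_w by simp
    qed
  qed simp
qed

lemma ext_letter_conv_nth_append:
  "j \<le> length w \<Longrightarrow> ext_letter w j = (w @ [length w + 1]) ! j"
  by (auto simp: ext_letter_def nth_append)

lemma gap_ok_iff_is_gap:
  assumes "distinct w" "k < length w" "w ! k = x"
  shows "gap_ok w x j \<longleftrightarrow> k < j \<and> is_gap x (w @ [length w + 1]) j"
proof -
  have "(\<exists>k'. k' < length w \<and> w ! k' = x \<and> k' < j) \<longleftrightarrow> k < j"
    using assms nth_eq_iff_index_eq by blast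
  then show ?thesis
    unfolding gap_ok_def is_gap_def
    by (auto simp: ext_letter_conv_nth_append simp del: One_nat_def)
qed

lemma move_right_snoc_sentinel:
  assumes "distinct w" "x \<in> set w"
  shows "move_right x w @ [length w + 1] = slide x (w @ [length w + 1])"
proof -
  define B where "B = length w + 1"
  obtain p q where w: "w = p @ x # q" "x \<notin> set p"
    using split_list_first[OF assms(2)] by blast
  define k where "k = length p"
  have k: "k < length w" "w ! k = x" using w k_def by auto
  have "{k'. k' < length w \<and> w ! k' = x} = {k}"
    using k assms(1) nth_eq_iff_index_eq by blast
  then have pos: "the_elem {k'. k' < length w \<and> w ! k' = x} = k" by simp
  have gap: "gap_ok w x j \<longleftrightarrow> (\<exists>i. j = Suc k + i \<and> is_gap x (q @ [B]) i)" for j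
  proof -
    have "is_gap x (w @ [B]) (Suc k + i) \<longleftrightarrow> is_gap x (q @ [B]) i" for i
      using is_gap_append[of x "p @ [x]" "q @ [B]" i] w(1) k_def by simp
    then show ?thesis
      using gap_ok_iff_is_gap[OF assms(1) k] B_def by (metis add_Suc less_iff_Suc_add)
  qed
  have slide_w: "slide x (w @ [B]) = (case insert_at_gap x (q @ [B]) of None \<Rightarrow> w @ [B] | Some r \<Rightarrow> p @ r)"
    unfolding w(1) using w(2) by (simp add: slide_split split: option.split)
  show ?thesis
  proof (cases "\<exists>i. is_gap x (q @ [B]) i")
    case False
    then have "move_right x w = w" using gap by (auto simp: move_right_def)
    with False show ?thesis using slide_w by (simp add: insert_at_gap_conv_Least B_def)
  next
    case True
    define i where "i = (LEAST i. is_gap x (q @ [B]) i)"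
    have "is_gap x (q @ [B]) i" using True unfolding i_def by (rule LeastI_ex)
    then have i_le: "Suc i \<le> length q" by (simp add: is_gap_def)
    have least: "(LEAST j. gap_ok w x j) = Suc k + i"
    proof (rule Least_equality)
      show "gap_ok w x (Suc k + i)" using gap \<open>is_gap x (q @ [B]) i\<close> by blast
      show "Suc k + i \<le> j" if "gap_ok w x j" for j
        using that gap i_def Least_le by fastforce
    qed
    have "\<exists>j. gap_ok w x j" using gap True by blast
    then have "move_right x w
        = take k w @ drop (Suc k) (take (Suc (Suc k + i)) w) @ [x] @ drop (Suc (Suc k + i)) w"
      unfolding move_right_def using assms(2) pos least by (simp add: Let_def)
    also have "\<dots> = p @ take (Suc i) q @ x # drop (Suc i) q"
      using w(1) k_def by simp
    finally show ?thesis
      using slide_w True i_le by (simp add: insert_at_gap_conv_Least Let_def i_def B_def)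
  qed
qed

lemma fold_move_right_snoc_sentinel:
  assumes "distinct w" "set xs \<subseteq> set w"
  shows "fold move_right xs w @ [length w + 1] = fold slide xs (w @ [length w + 1])"
  using assms
proof (induction xs arbitrary: w)
  case (Cons x xs)
  have step: "move_right x w @ [length w + 1] = slide x (w @ [length w + 1])"
    using Cons.prems by (intro move_right_snoc_sentinel) auto
  have "mset (move_right x w) = mset w"
    using arg_cong[where f = mset, OF step] by (simp add: mset_slide)
  then have "distinct (move_right x w)" "set (move_right x w) = set w"
    "length (move_right x w) = length w"
    using Cons.prems(1) mset_eq_imp_distinct_iff mset_eq_setD mset_eq_length by blast+
  with Cons.IH[of "move_right x w"] Cons.prems step show ?case by simp
qed simp

theorem theorem4p1:
  fixes n :: nat and \<pi> :: "nat list"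
  assumes "is_perm n \<pi>"
  shows "stack_sort \<pi> = fold move_right (descent_tops \<pi>) \<pi>"
proof -
  have distinct: "distinct \<pi>" and letters: "set \<pi> = {1..n}"
    using assms by (simp_all add: is_perm_def)
  then have "length \<pi> = n" using distinct_card by fastforce
  with letters have bounded: "\<forall>a\<in>set \<pi>. a < length \<pi> + 1" by auto
  have "fold move_right (descent_tops \<pi>) \<pi> @ [length \<pi> + 1]
      = fold slide (descent_tops \<pi>) (\<pi> @ [length \<pi> + 1])"
    using distinct set_descent_tops by (rule fold_move_right_snoc_sentinel)
  also have "\<dots> = stack_sort \<pi> @ [length \<pi> + 1]"
    using fold_slide_descent_tops[OF distinct bounded, of "[]"] by simp
  finally show ?thesis by simp
qed

end
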